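(* Let $dY+\Omega Y=0$ be a rank $2$ linear differential system with \[\Omega=\left(\frac{A_{-m}}{x^m}+\cdots+\frac{A_{-1}}{x}+A(x)\right)dx,\] where $A_{-m},\dots,A_{-1}\in\operatorname{Mat}(2,\mathbb{C})$, $A_{-m}\ne0$, $A\in\operatorname{Mat}(2,\mathbb{C}\{x\})$, and the pole order $m$ at $x=0$ is minimal (cannot be decreased by a meromorphic gauge transformation). Suppose $m\geq 2$, $A_{-m}$ is not semi-simple, and $A_{-m}$ is trace-free. Then the formal data of the system are generic in the sense of Inaba: the diagonal entries $\lambda^{\pm}\in\mathbb{C}[z^{-1}]$ of its Hukuhara–Turrittin ramified formal normal form $\mathrm{diag}(\lambda^+,\lambda^-)dz$ (in the variable $z$ with $x=z^2$) have nonzero coefficient of $z^{-(2m-2)}$.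
   Context: In the irregular ramified case ($m\ge2$ minimal, $A_{-m}$ not semi-simple), the system is formally holomorphically gauge equivalent to $\begin{pmatrix}\alpha&\beta\\ x\beta&\alpha-\frac{1}{2x}\end{pmatrix}dx$ with $\alpha,\beta$ Laurent polynomials in $x$; after the ramification $x=z^2$ and a further gauge transformation this becomes the Hukuhara–Turrittin ramified formal normal form $\mathrm{diag}(\lambda^+,\lambda^-)dz$ with $\lambda^\pm=2(\pm x\beta+z\alpha)$, determined up to permutation. *)

theory Defs
  imports "HOL-Analysis.Analysis" "HOL-Computational_Algebra.Formal_Laurent_Series"
begin

text \<open>A Laurent series is convergent (an element of C{x}[1/x]) iff after removing
  the power of x it is a power series with positive radius of convergence.\<close>
definition conv_fls :: "complex fls \<Rightarrow> bool" where
  "conv_fls f \<longleftrightarrow> fps_conv_radius (fls_base_factor_to_fps f) > 0"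

definition mero_mat :: "complex fls ^ 2 ^ 2 \<Rightarrow> bool" where
  "mero_mat M \<longleftrightarrow> (\<forall>i j. conv_fls (M $ i $ j))"

definition mat_deriv :: "complex fls ^ 2 ^ 2 \<Rightarrow> complex fls ^ 2 ^ 2" where
  "mat_deriv G = (\<chi> i j. fls_deriv (G $ i $ j))"

text \<open>The gauge transformation Y = G Y' turns dY + Omega Y = 0 into dY' + Omega' Y' = 0 with
  Omega' = G^-1 Omega G + G^-1 dG, i.e. G Omega' = Omega G + dG (connection matrices are
  coefficients of dx, resp. dz).\<close>
definition gauge_by :: "complex fls ^ 2 ^ 2 \<Rightarrow> complex fls ^ 2 ^ 2 \<Rightarrow> complex fls ^ 2 ^ 2 \<Rightarrow> bool" where
  "gauge_by G \<Omega> \<Omega>' \<longleftrightarrow> invertible G \<and> mat_deriv G + \<Omega> ** G = G ** \<Omega>'"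

definition pole_order_ge :: "complex fls ^ 2 ^ 2 \<Rightarrow> nat \<Rightarrow> bool" where
  "pole_order_ge \<Omega> m \<longleftrightarrow> (\<exists>i j. \<Omega> $ i $ j \<noteq> 0 \<and> fls_subdegree (\<Omega> $ i $ j) \<le> - int m)"

definition pole_order_le :: "complex fls ^ 2 ^ 2 \<Rightarrow> nat \<Rightarrow> bool" where
  "pole_order_le \<Omega> m \<longleftrightarrow> (\<forall>i j. \<forall>n < - int m. fls_nth (\<Omega> $ i $ j) n = 0)"

definition coeff_mat :: "complex fls ^ 2 ^ 2 \<Rightarrow> int \<Rightarrow> complex ^ 2 ^ 2" where
  "coeff_mat \<Omega> k = (\<chi> i j. fls_nth (\<Omega> $ i $ j) k)"

definition minimal_pole_order :: "complex fls ^ 2 ^ 2 \<Rightarrow> nat \<Rightarrow> bool" where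
  "minimal_pole_order \<Omega> m \<longleftrightarrow>
     (\<forall>G \<Omega>'. mero_mat G \<and> gauge_by G \<Omega> \<Omega>' \<longrightarrow> pole_order_ge \<Omega>' m)"

definition semisimple :: "complex ^ 2 ^ 2 \<Rightarrow> bool" where
  "semisimple A \<longleftrightarrow> (\<exists>(P::complex^2^2) (D::complex^2^2). invertible P \<and> (\<forall>i j. i \<noteq> j \<longrightarrow> D $ i $ j = 0) \<and> A ** P = P ** D)"

text \<open>Pull-back of Omega(x) dx under x = z^2: Omega(z^2) 2z dz.\<close>
definition ramify2 :: "complex fls ^ 2 ^ 2 \<Rightarrow> complex fls ^ 2 ^ 2" where
  "ramify2 \<Omega> = (\<chi> i j. fls_compose_power (\<Omega> $ i $ j) 2 * (2 * fls_X))"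

definition diag2 :: "complex fls \<Rightarrow> complex fls \<Rightarrow> complex fls ^ 2 ^ 2" where
  "diag2 a b = (\<chi> i j. if i = j then (if i = 1 then a else b) else 0)"

definition poly_zinv :: "complex fls \<Rightarrow> bool" where
  "poly_zinv l \<longleftrightarrow> (\<forall>n > 0. fls_nth l n = 0)"

definition ramified_normal_form :: "complex fls ^ 2 ^ 2 \<Rightarrow> complex fls \<Rightarrow> complex fls \<Rightarrow> bool" where
  "ramified_normal_form \<Omega> lp lm \<longleftrightarrow> poly_zinv lp \<and> poly_zinv lm \<and>
     (\<exists>G. gauge_by G (ramify2 \<Omega>) (diag2 lp lm))"

end

theory Submission
  imports Defs
begin

text \<open>
  Conjugate the nilpotent leading coefficient to the Jordan block [[0, 1], [0, 0]]. Minimality of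
  the pole order forces the lower left entry c of the next coefficient to be nonzero, since
  otherwise the shearing gauge diag(1, x) would lower the pole order. After x = z^2 and the
  shearing diag(1, z), the connection has pole order 2m - 2 in z with leading coefficient
  [[0, 2], [2c, 0]], whose eigenvalues r and -r are distinct and nonzero. Splitting off these
  eigenvalues formally and removing the terms of positive degree of each diagonal entry by an
  exponential gauge gives a normal form whose coefficients of z^-(2m-2) are r and -r.
  Conversely, a gauge transformation between two diagonal connections has an invertible, hence
  nonzero, entry in each column, and comparing lowest order terms of its logarithmic derivative
  shows that every coefficient of order below -1 of one diagonal form is one of the other. So
  every normal form has the coefficients r and -r of z^-(2m-2).
\<close>

(* The infix syntax of fps_nth would clash with vector indexing. *)
no_notation fps_nth (infixl "$" 75)

section \<open>Gauge transformations\<close>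

lemmas matrix_2x2_simps = vec_eq_iff forall_2 matrix_matrix_mult_def sum_2 mat_def

definition mat2 :: "'a \<Rightarrow> 'a \<Rightarrow> 'a \<Rightarrow> 'a \<Rightarrow> 'a^2^2" where
  "mat2 a b c d = (\<chi> i j. if i = 1 then (if j = 1 then a else b) else (if j = 1 then c else d))"

lemma mat2_nth [simp]:
  "mat2 a b c d $ 1 $ 1 = a" "mat2 a b c d $ 1 $ 2 = b"
  "mat2 a b c d $ 2 $ 1 = c" "mat2 a b c d $ 2 $ 2 = d"
  by (simp_all add: mat2_def)

lemma mat2_0 [simp]: "mat2 0 0 0 0 = 0"
  by (simp add: mat2_def vec_eq_iff)

lemma eq_mat2_iff: "M = mat2 a b c d \<longleftrightarrow> M$1$1 = a \<and> M$1$2 = b \<and> M$2$1 = c \<and> M$2$2 = d"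
  by (auto simp: vec_eq_iff forall_2)

lemma diag2_eq_mat2: "diag2 a b = mat2 a 0 0 b"
  by (simp add: diag2_def eq_mat2_iff)

lemma invertible_2x2_iff: "invertible (A::'a::field^2^2) \<longleftrightarrow> A$1$1 * A$2$2 - A$1$2 * A$2$1 \<noteq> 0"
  by (simp add: invertible_det_nz det_2)

lemma matrix_add_rdistrib: "((A::'a::semiring_1^'n^'m) + B) ** C = A ** C + B ** C"
  by (vector matrix_matrix_mult_def sum.distrib[symmetric] field_simps)

lemma matrix_inv_mult:
  assumes "invertible A"
  shows "A ** matrix_inv A = mat 1" "matrix_inv A ** A = mat 1"
  using someI_ex[OF assms[unfolded invertible_def]] unfolding matrix_inv_def by auto

lemma mat_deriv_mult: "mat_deriv (A ** B) = mat_deriv A ** B + A ** mat_deriv B"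
  by (simp add: matrix_2x2_simps mat_deriv_def algebra_simps)

lemma mat_deriv_mat_1 [simp]: "mat_deriv (mat 1) = 0"
  by (simp add: mat_deriv_def mat_def vec_eq_iff)

lemma gauge_by_trans:
  assumes "gauge_by G1 A B" "gauge_by G2 B C"
  shows "gauge_by (G1 ** G2) A C"
proof -
  have e1: "mat_deriv G1 + A ** G1 = G1 ** B" and e2: "mat_deriv G2 + B ** G2 = G2 ** C"
    using assms unfolding gauge_by_def by auto
  have "mat_deriv (G1 ** G2) + A ** (G1 ** G2) = (mat_deriv G1 + A ** G1) ** G2 + G1 ** mat_deriv G2"
    by (simp add: mat_deriv_mult matrix_add_rdistrib matrix_mul_assoc algebra_simps)
  also have "\<dots> = G1 ** (B ** G2 + mat_deriv G2)"
    by (simp add: e1 matrix_add_ldistrib matrix_mul_assoc)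
  also have "\<dots> = G1 ** G2 ** C"
    by (simp add: e2 add.commute matrix_mul_assoc)
  finally show ?thesis
    using assms invertible_mult unfolding gauge_by_def by blast
qed

lemma gauge_by_sym:
  assumes "gauge_by G A B"
  shows "gauge_by (matrix_inv G) B A"
proof -
  define H where "H = matrix_inv G"
  have GH: "G ** H = mat 1" and HG: "H ** G = mat 1"
    using assms unfolding gauge_by_def H_def by (simp_all add: matrix_inv_mult)
  have e: "mat_deriv G + A ** G = G ** B" using assms unfolding gauge_by_def by auto
  have dH: "H ** mat_deriv G ** H = - mat_deriv H"
  proof -
    have "mat_deriv H ** G + H ** mat_deriv G = 0"
      using arg_cong[OF HG, of mat_deriv] by (simp add: mat_deriv_mult)
    hence "(mat_deriv H ** G + H ** mat_deriv G) ** H = 0" by simp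
    thus ?thesis
      by (simp add: matrix_add_rdistrib GH flip: matrix_mul_assoc)
        (simp add: matrix_mul_assoc eq_neg_iff_add_eq_0 add.commute)
  qed
  have "H ** (mat_deriv G + A ** G) ** H = H ** (G ** B) ** H" by (simp add: e)
  hence "H ** mat_deriv G ** H + H ** A = B ** H"
    by (simp add: matrix_add_ldistrib matrix_add_rdistrib matrix_mul_assoc GH HG)
      (simp add: GH flip: matrix_mul_assoc)
  hence "mat_deriv H + B ** H = H ** A" using dH by (simp add: algebra_simps)
  moreover have "invertible H" using GH HG unfolding invertible_def by blast
  ultimately show ?thesis unfolding gauge_by_def H_def by blast
qed

definition const_mat :: "complex^2^2 \<Rightarrow> complex fls^2^2" where
  "const_mat P = (\<chi> i j. fls_const (P $ i $ j))"

lemma const_mat_nth [simp]: "const_mat P $ i $ j = fls_const (P $ i $ j)"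
  by (simp add: const_mat_def)

lemma const_mat_mult: "const_mat (P ** Q) = const_mat P ** const_mat Q"
  by (simp add: matrix_2x2_simps fls_plus_const)

lemma const_mat_1: "const_mat (mat 1) = mat 1"
  by (simp add: matrix_2x2_simps)

lemma coeff_mat_conj_const: "coeff_mat (const_mat P ** F ** const_mat Q) n = P ** coeff_mat F n ** Q"
  by (simp add: matrix_2x2_simps coeff_mat_def algebra_simps)

lemma gauge_by_const:
  assumes "P ** Pv = mat 1" "Pv ** P = mat 1"
  shows "gauge_by (const_mat P) A (const_mat Pv ** A ** const_mat P)"
proof -
  have PPv: "const_mat P ** const_mat Pv = mat 1" and PvP: "const_mat Pv ** const_mat P = mat 1"
    by (simp_all add: assms const_mat_1 flip: const_mat_mult)
  have "mat_deriv (const_mat P) = 0" by (simp add: mat_deriv_def vec_eq_iff)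
  moreover have "const_mat P ** (const_mat Pv ** A ** const_mat P) = A ** const_mat P"
    by (simp add: matrix_mul_assoc PPv)
  moreover have "invertible (const_mat P)"
    using PPv PvP unfolding invertible_def by blast
  ultimately show ?thesis unfolding gauge_by_def by simp
qed

lemma pole_order_le_iff: "pole_order_le \<Omega> m \<longleftrightarrow> (\<forall>n < - int m. coeff_mat \<Omega> n = 0)"
  by (auto simp: pole_order_le_def coeff_mat_def vec_eq_iff)

lemma pole_order_ge_iff: "pole_order_ge \<Omega> m \<longleftrightarrow> (\<exists>n \<le> - int m. coeff_mat \<Omega> n \<noteq> 0)"
proof
  assume "pole_order_ge \<Omega> m"
  then obtain i j where "\<Omega> $ i $ j \<noteq> 0" "fls_subdegree (\<Omega> $ i $ j) \<le> - int m"
    unfolding pole_order_ge_def by blast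
  then show "\<exists>n \<le> - int m. coeff_mat \<Omega> n \<noteq> 0"
    by (auto simp: coeff_mat_def vec_eq_iff intro!: exI[of _ "fls_subdegree (\<Omega> $ i $ j)"]
        dest: nth_fls_subdegree_nonzero)
next
  assume "\<exists>n \<le> - int m. coeff_mat \<Omega> n \<noteq> 0"
  then obtain n i j where "n \<le> - int m" "fls_nth (\<Omega> $ i $ j) n \<noteq> 0"
    by (auto simp: coeff_mat_def vec_eq_iff)
  then show "pole_order_ge \<Omega> m"
    unfolding pole_order_ge_def by (metis fls_subdegree_leI fls_zero_nth order_trans)
qed

lemma pole_order_le_conj_const:
  "pole_order_le \<Omega> m \<Longrightarrow> pole_order_le (const_mat Pv ** \<Omega> ** const_mat P) m"
  by (simp add: pole_order_le_iff coeff_mat_conj_const)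

section \<open>Formal splitting of a leading term with distinct eigenvalues\<close>

definition fps_mat :: "(nat \<Rightarrow> 'a::zero^'n^'m) \<Rightarrow> 'a fps^'n^'m" where
  "fps_mat C = (\<chi> i j. Abs_fps (\<lambda>n. C n $ i $ j))"

lemma fps_nth_fps_mat [simp]: "fps_nth (fps_mat C $ i $ j) n = C n $ i $ j"
  by (simp add: fps_mat_def)

lemma fps_nth_fps_mat_mult:
  fixes C D :: "nat \<Rightarrow> 'a::comm_semiring_1^'n^'n"
  shows "fps_nth ((fps_mat C ** fps_mat D) $ i $ j) n = (\<Sum>l\<le>n. C l ** D (n - l)) $ i $ j"
proof -
  have "fps_nth ((fps_mat C ** fps_mat D) $ i $ j) n
      = (\<Sum>c\<in>UNIV. \<Sum>l=0..n. C l $ i $ c * D (n - l) $ c $ j)"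
    by (simp add: matrix_matrix_mult_def fps_sum_nth fps_mult_nth)
  also have "\<dots> = (\<Sum>l\<le>n. C l ** D (n - l)) $ i $ j"
    by (subst sum.swap) (simp add: matrix_matrix_mult_def atLeast0AtMost)
  finally show ?thesis .
qed

definition fls_mat :: "int \<Rightarrow> complex fps^2^2 \<Rightarrow> complex fls^2^2" where
  "fls_mat e A = (\<chi> i j. fls_X_intpow e * fps_to_fls (A $ i $ j))"

lemma fls_mat_add: "fls_mat e A + fls_mat e B = fls_mat e (A + B)"
  by (simp add: fls_mat_def vec_eq_iff distrib_left)

lemma fls_mat_mult: "fls_mat e A ** fls_mat e' B = fls_mat (e + e') (A ** B)"
  by (simp add: matrix_2x2_simps fls_mat_def fls_times_fps_to_fls fls_shifted_times_simps
      fls_X_intpow_times_conv_shift algebra_simps)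

lemma mat_deriv_fls_mat_0:
  "mat_deriv (fls_mat 0 G) = fls_mat (- int k) (\<chi> i j. fps_X ^ k * fps_deriv (G $ i $ j))"
  by (simp add: mat_deriv_def fls_mat_def vec_eq_iff fls_deriv_fps_to_fls fls_times_fps_to_fls
      fps_to_fls_power fls_shifted_times_simps fls_X_power_times_conv_shift)

lemma det_fls_mat_0: "det (fls_mat 0 G) = fps_to_fls (det G)"
  by (simp add: det_2 fls_mat_def fls_times_fps_to_fls)

lemma gauge_by_fls_mat:
  fixes G A L :: "complex fps^2^2"
  assumes eq: "\<And>i j. fps_X ^ k * fps_deriv (G $ i $ j) + (A ** G) $ i $ j = (G ** L) $ i $ j"
    and "det G \<noteq> 0"
  shows "gauge_by (fls_mat 0 G) (fls_mat (- int k) A) (fls_mat (- int k) L)"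
proof -
  have "mat_deriv (fls_mat 0 G) + fls_mat (- int k) A ** fls_mat 0 G
      = fls_mat (- int k) ((\<chi> i j. fps_X ^ k * fps_deriv (G $ i $ j)) + A ** G)"
    by (simp add: mat_deriv_fls_mat_0[of G k] fls_mat_mult fls_mat_add)
  also have "(\<chi> i j. fps_X ^ k * fps_deriv (G $ i $ j)) + A ** G = G ** L"
    using eq by (simp add: vec_eq_iff)
  also have "fls_mat (- int k) (G ** L) = fls_mat 0 G ** fls_mat (- int k) L"
    by (simp add: fls_mat_mult)
  finally show ?thesis
    using assms(2) by (simp add: gauge_by_def invertible_det_nz det_fls_mat_0)
qed

lemma fls_mat_of_pole_order_le:
  assumes "pole_order_le M k"
  shows "M = fls_mat (- int k) (fps_mat (\<lambda>n. coeff_mat M (int n - int k)))"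
proof -
  have "fls_nth (M $ i $ j) n
      = fls_nth (fls_mat (- int k) (fps_mat (\<lambda>n. coeff_mat M (int n - int k))) $ i $ j) n" for i j n
    using assms by (auto simp: pole_order_le_def fls_mat_def fls_shifted_times_simps coeff_mat_def)
  then show ?thesis by (simp add: vec_eq_iff fls_eq_iff)
qed

(* The coefficients G n, L n of a formal gauge G and a diagonal connection matrix L with
   x^k G' + A G = G L, where A has coefficients C n and C 0 is diagonal with distinct entries.
   In degree n this equation reads C 0 ** G n - G n ** C 0 - L n = - T, which determines the
   off-diagonal G n and the diagonal L n. The guard 2 \<le> k makes the recursion well founded:
   for k = 1 the unknown G n itself would occur in T. *)
function splitting_coeffs ::
  "nat \<Rightarrow> (nat \<Rightarrow> complex^2^2) \<Rightarrow> nat \<Rightarrow> (complex^2^2) \<times> (complex^2^2)" where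
  "splitting_coeffs k C n =
     (if n = 0 then (mat 1, C 0) else
      let T = C n
              + (\<Sum>i\<in>{1..<n}. C i ** fst (splitting_coeffs k C (n - i))
                                 - fst (splitting_coeffs k C (n - i)) ** snd (splitting_coeffs k C i))
              + (if 2 \<le> k \<and> k \<le> n
                 then (\<chi> a b. of_nat (n + 1 - k) * fst (splitting_coeffs k C (n + 1 - k)) $ a $ b)
                 else 0)
      in ((\<chi> a b. if a = b then 0 else T $ a $ b / (C 0 $ b $ b - C 0 $ a $ a)),
          (\<chi> a b. if a = b then T $ a $ b else 0)))"
  by pat_completeness auto
termination by (relation "Wellfounded.measure (\<lambda>(k, C, n). n)") auto

declare splitting_coeffs.simps [simp del]

lemma sum_atMost_split_ends:
  assumes "(n::nat) > 0"
  shows "(\<Sum>i\<le>n. f i) = f 0 + (\<Sum>i\<in>{1..<n}. f i) + (f n :: 'a::comm_monoid_add)"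
proof -
  have "{..n} = insert 0 (insert n {1..<n})" using assms by auto
  then show ?thesis using assms by (simp add: ac_simps)
qed

lemma splitting_coeffs_recurrence:
  assumes "k \<ge> 2" "C 0 = mat2 m1 0 0 m2" "m1 \<noteq> m2"
  defines "G \<equiv> \<lambda>n. fst (splitting_coeffs k C n)" and "L \<equiv> \<lambda>n. snd (splitting_coeffs k C n)"
  shows "(\<Sum>i\<le>n. C i ** G (n - i))
           + (if k \<le> n then (\<chi> a b. of_nat (n + 1 - k) * G (n + 1 - k) $ a $ b) else 0)
         = (\<Sum>i\<le>n. G (n - i) ** L i)"
proof (cases "n = 0")
  case True
  then show ?thesis
    using assms(1) by (simp add: G_def L_def splitting_coeffs.simps)
next
  case False
  have G0: "G 0 = mat 1" and L0: "L 0 = C 0" by (simp_all add: G_def L_def splitting_coeffs.simps)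
  define S1 where "S1 = (\<Sum>i\<in>{1..<n}. C i ** G (n - i))"
  define S2 where "S2 = (\<Sum>i\<in>{1..<n}. G (n - i) ** L i)"
  define D where "D = (if k \<le> n then (\<chi> a b. of_nat (n + 1 - k) * G (n + 1 - k) $ a $ b) else 0)"
  define T where "T = C n + (S1 - S2) + D"
  have T_eq: "T = C n
       + (\<Sum>i\<in>{1..<n}. C i ** fst (splitting_coeffs k C (n - i))
                          - fst (splitting_coeffs k C (n - i)) ** snd (splitting_coeffs k C i))
       + (if 2 \<le> k \<and> k \<le> n
          then (\<chi> a b. of_nat (n + 1 - k) * fst (splitting_coeffs k C (n + 1 - k)) $ a $ b)
          else 0)"
    using assms(1) by (simp add: T_def S1_def S2_def D_def G_def L_def sum_subtractf)
  have "(G n, L n) = ((\<chi> a b. if a = b then 0 else T $ a $ b / (C 0 $ b $ b - C 0 $ a $ a)),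
                         (\<chi> a b. if a = b then T $ a $ b else 0))"
    unfolding G_def L_def splitting_coeffs.simps[of k C n] Let_def T_eq using False by simp
  then have Gn: "G n = (\<chi> a b. if a = b then 0 else T $ a $ b / (C 0 $ b $ b - C 0 $ a $ a))"
    and Ln: "L n = (\<chi> a b. if a = b then T $ a $ b else 0)"
    by simp_all
  have "C 0 ** G n + S1 + C n + D = G n ** C 0 + S2 + L n"
  proof -
    have S2_eq: "S2 = C n + S1 + D - T" by (simp add: T_def algebra_simps)
    show ?thesis
      unfolding S2_eq Gn Ln assms(2) using assms(3) by (simp add: matrix_2x2_simps field_simps)
  qed
  then show ?thesis
    using False by (simp add: sum_atMost_split_ends G0 L0 S1_def S2_def D_def)
qed

lemma splitting_fps_identity:
  assumes "k \<ge> 2" "C 0 = mat2 m1 0 0 m2" "m1 \<noteq> m2"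
  defines "G \<equiv> \<lambda>n. fst (splitting_coeffs k C n)" and "L \<equiv> \<lambda>n. snd (splitting_coeffs k C n)"
  shows "fps_X ^ k * fps_deriv (fps_mat G $ a $ b) + (fps_mat C ** fps_mat G) $ a $ b
           = (fps_mat G ** fps_mat L) $ a $ b"
proof (rule fps_ext)
  fix n
  have "(\<Sum>i\<le>n. G (n - i) ** L i) = (\<Sum>i\<le>n. G i ** L (n - i))"
    by (rule sum.reindex_bij_witness[where i="\<lambda>i. n - i" and j="\<lambda>i. n - i"]) auto
  then have rec: "(\<Sum>i\<le>n. C i ** G (n - i))
      + (if k \<le> n then (\<chi> a b. of_nat (n + 1 - k) * G (n + 1 - k) $ a $ b) else 0)
      = (\<Sum>i\<le>n. G i ** L (n - i))"
    using splitting_coeffs_recurrence[where C = C and n = n, OF assms(1-3)] unfolding G_def L_def by simp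
  have "fps_nth (fps_X ^ k * fps_deriv (fps_mat G $ a $ b)) n
      = (if k \<le> n then of_nat (n + 1 - k) * G (n + 1 - k) $ a $ b else 0)"
    by (auto simp: fps_X_power_mult_nth Suc_diff_le)
  with arg_cong[OF rec, of "\<lambda>X. X $ a $ b"]
  show "fps_nth (fps_X ^ k * fps_deriv (fps_mat G $ a $ b) + (fps_mat C ** fps_mat G) $ a $ b) n
      = fps_nth ((fps_mat G ** fps_mat L) $ a $ b) n"
    by (simp add: fps_nth_fps_mat_mult add.commute split: if_splits)
qed

lemma formal_splitting:
  assumes "k \<ge> 2" "m1 \<noteq> m2" "pole_order_le M k" "coeff_mat M (- int k) = mat2 m1 0 0 m2"
  obtains G lam1 lam2 where
    "gauge_by G M (diag2 (fls_X_intpow (- int k) * fps_to_fls lam1) (fls_X_intpow (- int k) * fps_to_fls lam2))"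
    "fps_nth lam1 0 = m1" "fps_nth lam2 0 = m2"
proof -
  define C where "C = (\<lambda>n::nat. coeff_mat M (int n - int k))"
  define G where "G = (\<lambda>n. fst (splitting_coeffs k C n))"
  define L where "L = (\<lambda>n. snd (splitting_coeffs k C n))"
  have C0: "C 0 = mat2 m1 0 0 m2" using assms(4) by (simp add: C_def)
  have G0: "G 0 = mat 1" and L0: "L 0 = mat2 m1 0 0 m2"
    by (simp_all add: G_def L_def C0 splitting_coeffs.simps)
  have "det (fps_mat G) \<noteq> 0"
  proof -
    have "fps_nth (det (fps_mat G)) 0 = 1" by (simp add: det_2 G0 mat_def)
    then show ?thesis by auto
  qed
  then have "gauge_by (fls_mat 0 (fps_mat G))
      (fls_mat (- int k) (fps_mat C)) (fls_mat (- int k) (fps_mat L))"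
    using gauge_by_fls_mat splitting_fps_identity[where C = C, OF assms(1) C0 assms(2)]
    unfolding G_def L_def by blast
  moreover have "M = fls_mat (- int k) (fps_mat C)"
    unfolding C_def by (rule fls_mat_of_pole_order_le[OF assms(3)])
  moreover have "L n $ 1 $ 2 = 0 \<and> L n $ 2 $ 1 = 0" for n
    using L0 by (cases "n = 0") (simp_all add: L_def splitting_coeffs.simps[of k C n] Let_def)
  then have "fls_mat (- int k) (fps_mat L)
      = diag2 (fls_X_intpow (- int k) * fps_to_fls (fps_mat L $ 1 $ 1))
              (fls_X_intpow (- int k) * fps_to_fls (fps_mat L $ 2 $ 2))"
    by (auto simp: diag2_eq_mat2 eq_mat2_iff fls_mat_def intro!: fps_ext)
  ultimately show ?thesis
    using that L0 by auto
qed

(* p collects the terms of positive degree of x^-k lam, and the gauge factor exp(- integral p)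
   removes them. *)
lemma exp_gauge_scalar:
  fixes lam :: "complex fps"
  obtains e d where "e \<noteq> 0" "fls_deriv e + fls_X_intpow (- int k) * fps_to_fls lam * e = e * d"
    "poly_zinv d" "fls_nth d (- int k) = fps_nth lam 0"
proof -
  define p where "p = Abs_fps (\<lambda>n. if n = 0 then 0 else fps_nth lam (n + k))"
  define e where "e = fps_exp 1 oo fps_integral (- p) 0"
  define d where "d = fls_X_intpow (- int k) * fps_to_fls lam - fps_to_fls p"
  have "fps_deriv e = (fps_deriv (fps_exp 1) oo fps_integral (- p) 0) * fps_deriv (fps_integral (- p) 0)"
    unfolding e_def by (rule fps_compose_deriv) simp
  also have "\<dots> = - (e * p)" by (simp add: e_def fps_deriv_fps_integral)
  finally have "fls_deriv (fps_to_fls e) + fls_X_intpow (- int k) * fps_to_fls lam * fps_to_fls e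
      = fps_to_fls e * d"
    by (simp add: fls_deriv_fps_to_fls fls_times_fps_to_fls d_def algebra_simps)
  moreover have "fps_to_fls e \<noteq> 0"
  proof -
    have "fps_nth e 0 = 1" by (simp add: e_def)
    then show ?thesis by auto
  qed
  moreover have "poly_zinv d"
    unfolding poly_zinv_def
  proof (intro allI impI)
    fix n :: int
    assume "n > 0"
    then have "nat (n + int k) = nat n + k" by simp
    with \<open>n > 0\<close> show "fls_nth d n = 0" by (simp add: d_def p_def fls_shifted_times_simps)
  qed
  moreover have "fls_nth d (- int k) = fps_nth lam 0"
    by (simp add: d_def p_def) (simp add: fls_shifted_times_simps)
  ultimately show ?thesis using that by blast
qed

lemma gauge_by_diag2:
  assumes "e1 \<noteq> 0" "e2 \<noteq> 0" "fls_deriv e1 + a1 * e1 = e1 * b1" "fls_deriv e2 + a2 * e2 = e2 * b2"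
  shows "gauge_by (diag2 e1 e2) (diag2 a1 a2) (diag2 b1 b2)"
  using assms by (simp add: gauge_by_def invertible_2x2_iff diag2_eq_mat2 matrix_2x2_simps mat_deriv_def)

lemma diagonal_normal_form_exists:
  assumes "k \<ge> 2" "m1 \<noteq> m2" "pole_order_le M k" "coeff_mat M (- int k) = mat2 m1 0 0 m2"
  obtains G lp lm where "gauge_by G M (diag2 lp lm)" "poly_zinv lp" "poly_zinv lm"
    "fls_nth lp (- int k) = m1" "fls_nth lm (- int k) = m2"
proof -
  obtain G lam1 lam2 where G: "gauge_by G M
      (diag2 (fls_X_intpow (- int k) * fps_to_fls lam1) (fls_X_intpow (- int k) * fps_to_fls lam2))"
    and lam: "fps_nth lam1 0 = m1" "fps_nth lam2 0 = m2"
    using formal_splitting[OF assms] by blast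
  obtain e1 d1 where e1: "e1 \<noteq> 0" "fls_deriv e1 + fls_X_intpow (- int k) * fps_to_fls lam1 * e1 = e1 * d1"
    "poly_zinv d1" "fls_nth d1 (- int k) = fps_nth lam1 0"
    by (rule exp_gauge_scalar)
  obtain e2 d2 where e2: "e2 \<noteq> 0" "fls_deriv e2 + fls_X_intpow (- int k) * fps_to_fls lam2 * e2 = e2 * d2"
    "poly_zinv d2" "fls_nth d2 (- int k) = fps_nth lam2 0"
    by (rule exp_gauge_scalar)
  have "gauge_by (G ** diag2 e1 e2) M (diag2 d1 d2)"
    using gauge_by_trans[OF G gauge_by_diag2[OF e1(1) e2(1) e1(2) e2(2)]] .
  then show ?thesis
    using that e1(3,4) e2(3,4) lam by simp
qed

section \<open>Uniqueness of diagonal normal forms\<close>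

(* Differentiation lowers the subdegree by at most one, while the subdegree of h * d is
   fls_subdegree h + fls_subdegree d. *)
lemma fls_nth_log_deriv_below_minus_one:
  fixes h d :: "complex fls"
  assumes "h \<noteq> 0" and deriv: "fls_deriv h = h * d" and "n < -1"
  shows "fls_nth d n = 0"
proof (rule ccontr)
  assume "fls_nth d n \<noteq> 0"
  then have "d \<noteq> 0" and "fls_subdegree d \<le> n" by (auto intro: fls_subdegree_leI)
  define s where "s = fls_subdegree h + fls_subdegree d"
  have "fls_nth (h * d) s \<noteq> 0"
    using \<open>h \<noteq> 0\<close> \<open>d \<noteq> 0\<close> nth_fls_subdegree_nonzero[of "h * d"] by (simp add: s_def)
  moreover have "s + 1 < fls_subdegree h"
    using \<open>fls_subdegree d \<le> n\<close> \<open>n < -1\<close> by (simp add: s_def)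
  then have "fls_nth (fls_deriv h) s = 0" by simp
  ultimately show False using deriv by simp
qed

lemma gauge_by_diag2_coeffs_below_minus_one:
  assumes "gauge_by H (diag2 a1 a2) (diag2 b1 b2)" and "n < -1"
  shows "fls_nth b1 n \<in> {fls_nth a1 n, fls_nth a2 n}" "fls_nth b2 n \<in> {fls_nth a1 n, fls_nth a2 n}"
proof -
  have eq: "mat_deriv H + diag2 a1 a2 ** H = H ** diag2 b1 b2" and "invertible H"
    using assms(1) unfolding gauge_by_def by simp_all
  have "fls_deriv (H$1$1) = H$1$1 * (b1 - a1)" "fls_deriv (H$2$1) = H$2$1 * (b1 - a2)"
       "fls_deriv (H$1$2) = H$1$2 * (b2 - a1)" "fls_deriv (H$2$2) = H$2$2 * (b2 - a2)"
    using eq by (simp_all add: diag2_eq_mat2 matrix_2x2_simps mat_deriv_def algebra_simps eq_diff_eq)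
  note log_derivs = this[THEN fls_nth_log_deriv_below_minus_one[rotated, OF _ assms(2)]]
  have "H$1$1 \<noteq> 0 \<or> H$2$1 \<noteq> 0" "H$1$2 \<noteq> 0 \<or> H$2$2 \<noteq> 0"
    using \<open>invertible H\<close> by (auto simp: invertible_2x2_iff)
  then show "fls_nth b1 n \<in> {fls_nth a1 n, fls_nth a2 n}" "fls_nth b2 n \<in> {fls_nth a1 n, fls_nth a2 n}"
    using log_derivs by auto
qed

section \<open>Nilpotent leading term and minimality\<close>

lemma trace_zero_2x2:
  assumes "trace (A::'a::comm_ring_1^2^2) = 0"
  shows "A = mat2 (A$1$1) (A$1$2) (A$2$1) (- A$1$1)"
  using assms by (simp add: eq_mat2_iff trace_def sum_2 eq_neg_iff_add_eq_0 add.commute)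

lemma semisimple_if_trace_zero_det_nonzero:
  fixes A :: "complex^2^2"
  assumes "trace A = 0" "det A \<noteq> 0"
  shows "semisimple A"
proof -
  define a b c where "a = A$1$1" and "b = A$1$2" and "c = A$2$1"
  have A: "A = mat2 a b c (- a)"
    using trace_zero_2x2[OF assms(1)] by (simp add: a_def b_def c_def)
  have det: "a^2 + b * c \<noteq> 0"
    using assms(2) by (simp add: A det_2 power2_eq_square neg_eq_iff_add_eq_0)
  obtain P D :: "complex^2^2" where "invertible P" "A ** P = P ** D" "D $ 1 $ 2 = 0" "D $ 2 $ 1 = 0"
  proof (cases "b = 0")
    case False
    define s where "s = csqrt (a^2 + b * c)"
    have s2: "s * s = a * a + b * c" unfolding s_def by (metis power2_csqrt power2_eq_square)
    with det False have "b * s \<noteq> 0" by (auto simp: power2_eq_square)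
    then have "invertible (mat2 b b (s - a) (- s - a))"
      by (simp add: invertible_2x2_iff algebra_simps)
    moreover have "A ** mat2 b b (s - a) (- s - a) = mat2 b b (s - a) (- s - a) ** mat2 s 0 0 (- s)"
      using s2 by (simp add: A matrix_2x2_simps algebra_simps)
    ultimately show ?thesis by (intro that[of _ "mat2 s 0 0 (- s)"]) simp_all
  next
    case True
    with det have "a \<noteq> 0" by (simp add: power2_eq_square)
    then have "invertible (mat2 (2 * a) 0 c 1)" by (simp add: invertible_2x2_iff)
    moreover have "A ** mat2 (2 * a) 0 c 1 = mat2 (2 * a) 0 c 1 ** mat2 a 0 0 (- a)"
      using True by (simp add: A matrix_2x2_simps algebra_simps)
    ultimately show ?thesis by (intro that[of _ "mat2 a 0 0 (- a)"]) simp_all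
  qed
  moreover have "\<forall>i j. i \<noteq> j \<longrightarrow> D $ i $ j = 0"
    using \<open>D $ 1 $ 2 = 0\<close> \<open>D $ 2 $ 1 = 0\<close> by (simp add: forall_2)
  ultimately show ?thesis
    unfolding semisimple_def by blast
qed

lemma nilpotent_similar_jordan_block:
  fixes A :: "'a::field^2^2"
  assumes "A \<noteq> 0" "trace A = 0" "det A = 0"
  obtains P Pv where "P ** Pv = mat 1" "Pv ** P = mat 1" "Pv ** A ** P = mat2 0 1 0 0"
proof -
  define a b c where "a = A$1$1" and "b = A$1$2" and "c = A$2$1"
  have A: "A = mat2 a b c (- a)"
    using trace_zero_2x2[OF assms(2)] by (simp add: a_def b_def c_def)
  have det: "a * a + b * c = 0"
    using assms(3) by (simp add: A det_2 neg_eq_iff_add_eq_0)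
  show ?thesis
  proof (cases "b = 0")
    case False
    have "mat2 b 0 (- a) 1 ** mat2 (1 / b) 0 (a / b) 1 = mat 1"
      "mat2 (1 / b) 0 (a / b) 1 ** mat2 b 0 (- a) 1 = mat 1"
      using False by (simp_all add: matrix_2x2_simps field_simps)
    moreover have "mat2 (1 / b) 0 (a / b) 1 ** A ** mat2 b 0 (- a) 1 = mat2 0 1 0 0"
      using False det by (simp add: A matrix_2x2_simps field_simps)
    ultimately show ?thesis by (rule that)
  next
    case True
    with det have "a = 0" by simp
    with True assms(1) have "c \<noteq> 0" by (auto simp: A vec_eq_iff forall_2)
    show ?thesis
      by (rule that[of "mat2 0 1 c 0" "mat2 0 (1 / c) 1 0"])
        (use True \<open>a = 0\<close> \<open>c \<noteq> 0\<close> in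
          \<open>simp_all add: A matrix_2x2_simps field_simps\<close>)
  qed
qed

definition shear_mat :: "complex fls^2^2" where
  "shear_mat = mat2 1 0 0 fls_X"

definition shear_conn :: "complex fls^2^2 \<Rightarrow> complex fls^2^2" where
  "shear_conn B = mat2 (B$1$1) (fls_X * B$1$2) (fls_X_inv * B$2$1) (B$2$2 + fls_X_inv)"

lemma gauge_by_shear: "gauge_by shear_mat B (shear_conn B)"
proof -
  have "mat_deriv shear_mat = mat2 0 0 0 1"
    by (simp add: shear_mat_def mat_deriv_def eq_mat2_iff)
  moreover have "shear_mat ** shear_conn B = B ** shear_mat + mat2 0 0 0 1"
    by (simp add: shear_mat_def shear_conn_def matrix_2x2_simps fls_X_inv_conv_shift_1
        fls_X_times_conv_shift fls_shifted_times_simps ac_simps distrib_left)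
  ultimately show ?thesis
    by (simp add: gauge_by_def invertible_2x2_iff shear_mat_def add.commute)
qed

lemma coeff_mat_shear_conn:
  "coeff_mat (shear_conn B) n =
     mat2 (coeff_mat B n $ 1 $ 1) (coeff_mat B (n - 1) $ 1 $ 2)
          (coeff_mat B (n + 1) $ 2 $ 1) (coeff_mat B n $ 2 $ 2 + (if n = -1 then 1 else 0))"
  by (simp add: coeff_mat_def eq_mat2_iff shear_conn_def fls_X_times_conv_shift fls_X_inv_times_conv_shift)

lemma pole_order_le_shear_conn:
  assumes "pole_order_le R (Suc k)" "coeff_mat R (- int (Suc k)) = mat2 0 b 0 0"
    and "coeff_mat R (- int k) $ 2 $ 1 = 0" "k \<ge> 1"
  shows "pole_order_le (shear_conn R) k"
  unfolding pole_order_le_iff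
proof (intro allI impI)
  fix n :: int
  assume "n < - int k"
  then consider "n + 1 < - int (Suc k)" | "n + 1 = - int (Suc k)" | "n + 1 = - int k"
    by linarith
  then have "coeff_mat R (n + 1) $ 2 $ 1 = 0"
  proof cases
    case 1
    then show ?thesis using assms(1) by (simp add: pole_order_le_iff)
  next
    case 2
    then show ?thesis unfolding 2 assms(2) by simp
  next
    case 3
    then show ?thesis unfolding 3 assms(3) by simp
  qed
  moreover have "coeff_mat R n $ 1 $ 1 = 0 \<and> coeff_mat R n $ 2 $ 2 = 0"
  proof (cases "n = - int (Suc k)")
    case True
    then show ?thesis unfolding True assms(2) by simp
  next
    case False
    then show ?thesis
      using assms(1) \<open>n < - int k\<close> by (simp add: pole_order_le_iff)
  qed
  moreover have "coeff_mat R (n - 1) = 0"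
    using assms(1) \<open>n < - int k\<close> by (simp add: pole_order_le_iff)
  ultimately show "coeff_mat (shear_conn R) n = 0"
    using \<open>n < - int k\<close> \<open>k \<ge> 1\<close> by (simp add: coeff_mat_shear_conn)
qed

lemma conv_fls_fps_to_fls: "fps_conv_radius f > 0 \<Longrightarrow> conv_fls (fps_to_fls f)"
  unfolding conv_fls_def fls_base_factor_to_fps_to_fls by simp

lemma conv_fls_const: "conv_fls (fls_const c)"
  using conv_fls_fps_to_fls[of "fps_const c"] by simp

lemma conv_fls_const_mult_X: "conv_fls (fls_const c * fls_X)"
proof -
  have "fps_conv_radius (fps_const c * fps_X) \<ge> min \<infinity> \<infinity>"
    using fps_conv_radius_mult[of "fps_const c" fps_X] by simp
  then show ?thesis
    using conv_fls_fps_to_fls[of "fps_const c * fps_X"] by (simp add: fls_times_fps_to_fls)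
qed

lemma mero_mat_const_mult_shear: "mero_mat (const_mat P ** shear_mat)"
  by (simp add: mero_mat_def shear_mat_def forall_2 matrix_matrix_mult_def sum_2
      conv_fls_const conv_fls_const_mult_X)

lemma minimal_pole_order_lower_left_nonzero:
  fixes \<Omega> :: "complex fls^2^2" and P Pv :: "complex^2^2"
  defines "B \<equiv> const_mat Pv ** \<Omega> ** const_mat P"
  assumes "minimal_pole_order \<Omega> m" "m \<ge> 2" "P ** Pv = mat 1" "Pv ** P = mat 1"
    and "pole_order_le B m" "coeff_mat B (- int m) = mat2 0 1 0 0"
  shows "coeff_mat B (1 - int m) $ 2 $ 1 \<noteq> 0"
proof
  assume "coeff_mat B (1 - int m) $ 2 $ 1 = 0"
  then have "pole_order_le (shear_conn B) (m - 1)"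
    using assms(3,6,7) by (intro pole_order_le_shear_conn) (simp_all add: Suc_diff_le of_nat_diff)
  then have "\<not> pole_order_ge (shear_conn B) m"
    using assms(3) by (auto simp: pole_order_le_iff pole_order_ge_iff of_nat_diff)
  moreover have "gauge_by (const_mat P ** shear_mat) \<Omega> (shear_conn B)"
    unfolding B_def using gauge_by_trans[OF gauge_by_const[OF assms(4,5)] gauge_by_shear] .
  ultimately show False
    using assms(2) mero_mat_const_mult_shear unfolding minimal_pole_order_def by blast
qed

section \<open>Ramification\<close>

lemma ramify2_nth: "ramify2 \<Omega> $ i $ j = 2 * (fls_X * fls_compose_power (\<Omega> $ i $ j) 2)"
  by (simp add: ramify2_def ac_simps)

lemma coeff_mat_ramify2_odd:
  "coeff_mat (ramify2 \<Omega>) (2 * q + 1) = (\<chi> i j. 2 * coeff_mat \<Omega> q $ i $ j)"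
  by (simp add: vec_eq_iff coeff_mat_def ramify2_nth fls_X_times_conv_shift fls_nth_compose_power)

lemma coeff_mat_ramify2_even: "coeff_mat (ramify2 \<Omega>) (2 * q) = 0"
proof -
  have "\<not> (2::int) dvd 2 * q - 1" by presburger
  then show ?thesis
    by (simp add: vec_eq_iff coeff_mat_def ramify2_nth fls_X_times_conv_shift fls_nth_compose_power)
qed

lemma ramify2_conj_const:
  "ramify2 (const_mat Pv ** \<Omega> ** const_mat P) = const_mat Pv ** ramify2 \<Omega> ** const_mat P"
  by (simp add: ramify2_def matrix_2x2_simps algebra_simps del: fls_const_mult_const)

lemma pole_order_le_ramify2:
  assumes "pole_order_le B m" "m \<ge> 1"
  shows "pole_order_le (ramify2 B) (2 * m - 1)"
  unfolding pole_order_le_iff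
proof (intro allI impI)
  fix n :: int
  assume "n < - int (2 * m - 1)"
  show "coeff_mat (ramify2 B) n = 0"
  proof (cases "even n")
    case True
    then show ?thesis by (metis evenE coeff_mat_ramify2_even)
  next
    case False
    then obtain q where q: "n = 2 * q + 1" by (metis oddE)
    with \<open>n < - int (2 * m - 1)\<close> \<open>m \<ge> 1\<close> have "q < - int m" by linarith
    then show ?thesis
      using assms(1) by (simp add: q coeff_mat_ramify2_odd pole_order_le_iff vec_eq_iff)
  qed
qed

lemma ramified_shear_leading_term:
  assumes "m \<ge> 2" "pole_order_le B m" "coeff_mat B (- int m) = mat2 0 1 0 0"
  shows "pole_order_le (shear_conn (ramify2 B)) (2 * m - 2)"
    and "coeff_mat (shear_conn (ramify2 B)) (- int (2 * m - 2))
           = mat2 0 2 (2 * coeff_mat B (1 - int m) $ 2 $ 1) 0"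
proof -
  have idx: "- int (Suc (2 * m - 2)) = 2 * (- int m) + 1" "- int (2 * m - 2) = 2 * (1 - int m)"
    "- int (2 * m - 2) + 1 = 2 * (1 - int m) + 1" using assms(1) by simp_all
  have "Suc (2 * m - 2) = 2 * m - 1" using assms(1) by simp
  then have "pole_order_le (ramify2 B) (Suc (2 * m - 2))"
    using pole_order_le_ramify2[OF assms(2)] assms(1) by simp
  moreover have lead: "coeff_mat (ramify2 B) (- int (Suc (2 * m - 2))) = mat2 0 2 0 0"
    unfolding idx coeff_mat_ramify2_odd assms(3) by (simp add: eq_mat2_iff)
  moreover have even: "coeff_mat (ramify2 B) (- int (2 * m - 2)) = 0"
    unfolding idx by (rule coeff_mat_ramify2_even)
  ultimately show "pole_order_le (shear_conn (ramify2 B)) (2 * m - 2)"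
    using assms(1) by (intro pole_order_le_shear_conn) simp_all
  have idx': "- int (2 * m - 2) - 1 = - int (Suc (2 * m - 2))" "- int (2 * m - 2) \<noteq> -1"
    using assms(1) by simp_all
  show "coeff_mat (shear_conn (ramify2 B)) (- int (2 * m - 2))
      = mat2 0 2 (2 * coeff_mat B (1 - int m) $ 2 $ 1) 0"
    unfolding coeff_mat_shear_conn idx'(1) idx(3) lead even coeff_mat_ramify2_odd
    using idx'(2) by simp
qed

lemma antidiagonal_similar_diagonal:
  fixes b c :: complex
  assumes "b \<noteq> 0" "c \<noteq> 0"
  obtains Q Qv r where "Q ** Qv = mat 1" "Qv ** Q = mat 1"
    "Qv ** mat2 0 b c 0 ** Q = mat2 r 0 0 (- r)" "r \<noteq> 0"
proof -
  define r where "r = csqrt (b * c)"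
  have rr: "r * r = b * c" unfolding r_def by (metis power2_csqrt power2_eq_square)
  with assms have "r \<noteq> 0" by auto
  define Q where "Q = mat2 b b r (- r)"
  define Qv where "Qv = mat2 (1 / (2 * b)) (1 / (2 * r)) (1 / (2 * b)) (- 1 / (2 * r))"
  have "Q ** Qv = mat 1" "Qv ** Q = mat 1"
    using assms(1) \<open>r \<noteq> 0\<close> by (simp_all add: Q_def Qv_def matrix_2x2_simps field_simps)
  moreover have "Qv ** mat2 0 b c 0 ** Q = mat2 r 0 0 (- r)"
  proof -
    have "c = r * r / b" using rr assms(1) by (simp add: field_simps)
    then show ?thesis
      using assms(1) \<open>r \<noteq> 0\<close> by (simp add: Q_def Qv_def matrix_2x2_simps field_simps)
  qed
  ultimately show ?thesis using that \<open>r \<noteq> 0\<close> by blast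
qed

lemma ramified_gauge_distinct_leading_term:
  assumes "pole_order_le \<Omega> m" "coeff_mat \<Omega> (- int m) \<noteq> 0" "minimal_pole_order \<Omega> m" "m \<ge> 2"
    "\<not> semisimple (coeff_mat \<Omega> (- int m))" "trace (coeff_mat \<Omega> (- int m)) = 0"
  obtains G M r where "gauge_by G (ramify2 \<Omega>) M" "pole_order_le M (2 * m - 2)"
    "coeff_mat M (- int (2 * m - 2)) = mat2 r 0 0 (- r)" "r \<noteq> 0"
proof -
  have "det (coeff_mat \<Omega> (- int m)) = 0"
    using assms(5) semisimple_if_trace_zero_det_nonzero[OF assms(6)] by blast
  then obtain P Pv where PPv: "P ** Pv = mat 1" "Pv ** P = mat 1"
    and N: "Pv ** coeff_mat \<Omega> (- int m) ** P = mat2 0 1 0 0"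
    by (rule nilpotent_similar_jordan_block[OF assms(2,6)])
  define B where "B = const_mat Pv ** \<Omega> ** const_mat P"
  have B: "pole_order_le B m" "coeff_mat B (- int m) = mat2 0 1 0 0"
    unfolding B_def coeff_mat_conj_const N using assms(1) by (rule pole_order_le_conj_const) simp
  define c where "c = coeff_mat B (1 - int m) $ 2 $ 1"
  have "c \<noteq> 0"
    using minimal_pole_order_lower_left_nonzero[OF assms(3,4) PPv] B unfolding B_def c_def by blast
  obtain Q Qv r where QQv: "Q ** Qv = mat 1" "Qv ** Q = mat 1"
    and diag: "Qv ** mat2 0 2 (2 * c) 0 ** Q = mat2 r 0 0 (- r)" and "r \<noteq> 0"
    by (rule antidiagonal_similar_diagonal[of 2 "2 * c"]) (use \<open>c \<noteq> 0\<close> in simp_all)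
  define Z where "Z = shear_conn (ramify2 B)"
  have "gauge_by (const_mat P ** shear_mat) (ramify2 \<Omega>) Z"
    unfolding Z_def B_def ramify2_conj_const
    by (rule gauge_by_trans[OF gauge_by_const[OF PPv] gauge_by_shear])
  then have "gauge_by (const_mat P ** shear_mat ** const_mat Q) (ramify2 \<Omega>)
      (const_mat Qv ** Z ** const_mat Q)"
    by (rule gauge_by_trans[OF _ gauge_by_const[OF QQv]])
  moreover have "pole_order_le (const_mat Qv ** Z ** const_mat Q) (2 * m - 2)"
    unfolding Z_def by (rule pole_order_le_conj_const[OF ramified_shear_leading_term(1)[OF assms(4) B]])
  moreover have "coeff_mat (const_mat Qv ** Z ** const_mat Q) (- int (2 * m - 2)) = mat2 r 0 0 (- r)"
    unfolding Z_def coeff_mat_conj_const ramified_shear_leading_term(2)[OF assms(4) B] c_def[symmetric]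
    by (rule diag)
  ultimately show ?thesis using that \<open>r \<noteq> 0\<close> by blast
qed

theorem mainTheorem7:
  fixes \<Omega> :: "complex fls ^ 2 ^ 2" and m :: nat
  assumes "mero_mat \<Omega>"
    and "pole_order_le \<Omega> m"
    and "coeff_mat \<Omega> (- int m) \<noteq> 0"
    and "minimal_pole_order \<Omega> m"
    and "m \<ge> 2"
    and "\<not> semisimple (coeff_mat \<Omega> (- int m))"
    and "trace (coeff_mat \<Omega> (- int m)) = 0"
  shows "(\<exists>lp lm. ramified_normal_form \<Omega> lp lm) \<and>
         (\<forall>lp lm. ramified_normal_form \<Omega> lp lm \<longrightarrow>
            fls_nth lp (- (2 * int m - 2)) \<noteq> 0 \<and> fls_nth lm (- (2 * int m - 2)) \<noteq> 0)"
proof -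
  obtain G M r where G: "gauge_by G (ramify2 \<Omega>) M" and M: "pole_order_le M (2 * m - 2)"
    "coeff_mat M (- int (2 * m - 2)) = mat2 r 0 0 (- r)" and "r \<noteq> 0"
    using ramified_gauge_distinct_leading_term assms(2-7) by blast
  have "2 * m - 2 \<ge> 2" and k: "- int (2 * m - 2) = - (2 * int m - 2)" using assms(5) by simp_all
  obtain G' lp lm where G': "gauge_by G' M (diag2 lp lm)" "poly_zinv lp" "poly_zinv lm"
    and lead: "fls_nth lp (- int (2 * m - 2)) = r" "fls_nth lm (- int (2 * m - 2)) = - r"
    by (rule diagonal_normal_form_exists[OF \<open>2 * m - 2 \<ge> 2\<close> _ M])
      (use \<open>r \<noteq> 0\<close> in simp_all)
  have "ramified_normal_form \<Omega> lp lm"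
    unfolding ramified_normal_form_def using G' gauge_by_trans[OF G G'(1)] by blast
  moreover have "fls_nth lp' (- (2 * int m - 2)) \<noteq> 0 \<and> fls_nth lm' (- (2 * int m - 2)) \<noteq> 0"
    if nf: "ramified_normal_form \<Omega> lp' lm'" for lp' lm'
  proof -
    obtain H where "gauge_by H (ramify2 \<Omega>) (diag2 lp' lm')"
      using nf unfolding ramified_normal_form_def by blast
    then have "gauge_by (matrix_inv (G ** G') ** H) (diag2 lp lm) (diag2 lp' lm')"
      using gauge_by_trans[OF gauge_by_sym[OF gauge_by_trans[OF G G'(1)]]] by blast
    from gauge_by_diag2_coeffs_below_minus_one[OF this, of "- int (2 * m - 2)"]
    show ?thesis using lead \<open>r \<noteq> 0\<close> assms(5) k by auto
  qed
  ultimately show ?thesis by blast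
qed

end
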